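(* Let $n,\nu\ge1$ and let the coefficients $\gamma^{(f)}_{ik,j},\gamma^{(m)}_{ik,l}$ satisfy $\gamma^{(f)}_{ik,j}\ge0$, $\gamma^{(m)}_{ik,l}\ge0$ and $\sum_{j=1}^n\gamma^{(f)}_{ik,j}+\sum_{l=1}^\nu\gamma^{(m)}_{ik,l}=1$ for all $i\in\{1,\dots,n\}$, $k\in\{1,\dots,\nu\}$. Then the normalized gonosomal operator $V$ maps $\mathcal S^{n,\nu}$ into itself if and only if, for every $i\in\{1,\dots,n\}$ and $k\in\{1,\dots,\nu\}$, the vector $(\gamma^{(f)}_{ik,1},\dots,\gamma^{(f)}_{ik,n},\gamma^{(m)}_{ik,1},\dots,\gamma^{(m)}_{ik,\nu})$ belongs to $\mathcal S^{n,\nu}$.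
   Context: $S^{n+\nu-1}=\{(x_1,\dots,x_n,y_1,\dots,y_\nu)\in\mathbb{R}^{n+\nu}: x_i\ge0,\ y_j\ge0,\ \sum_i x_i+\sum_j y_j=1\}$. $\mathcal O=\{s\in S^{n+\nu-1}: (x_1,\dots,x_n)=0 \text{ or } (y_1,\dots,y_\nu)=0\}$ and $\mathcal S^{n,\nu}=S^{n+\nu-1}\setminus\mathcal O$. The normalized gonosomal operator $V$ on $\mathcal S^{n,\nu}$ is $V(x,y)=(x',y')$ with $x'_j=\dfrac{\sum_{i=1}^n\sum_{k=1}^\nu\gamma^{(f)}_{ik,j}x_iy_k}{(\sum_{i=1}^n x_i)(\sum_{k=1}^\nu y_k)}$ ($j=1,\dots,n$), $y'_l=\dfrac{\sum_{i=1}^n\sum_{k=1}^\nu\gamma^{(m)}_{ik,l}x_iy_k}{(\sum_{i=1}^n x_i)(\sum_{k=1}^\nu y_k)}$ ($l=1,\dots,\nu$). *)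

theory Defs
  imports Complex_Main
begin

text \<open>Points of R^(n+nu) are represented by a pair (x, y) of functions nat => real,
  where only x 1..x n and y 1..y nu are relevant.\<close>

definition simplex :: "nat \<Rightarrow> nat \<Rightarrow> ((nat \<Rightarrow> real) \<times> (nat \<Rightarrow> real)) set" where
  "simplex n \<nu> = {(x, y). (\<forall>i\<in>{1..n}. x i \<ge> 0) \<and> (\<forall>k\<in>{1..\<nu>}. y k \<ge> 0) \<and>
      (\<Sum>i=1..n. x i) + (\<Sum>k=1..\<nu>. y k) = 1}"

definition boundary_O :: "nat \<Rightarrow> nat \<Rightarrow> ((nat \<Rightarrow> real) \<times> (nat \<Rightarrow> real)) set" where
  "boundary_O n \<nu> = {(x, y) \<in> simplex n \<nu>. (\<forall>i\<in>{1..n}. x i = 0) \<or> (\<forall>k\<in>{1..\<nu>}. y k = 0)}"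

definition S_gon :: "nat \<Rightarrow> nat \<Rightarrow> ((nat \<Rightarrow> real) \<times> (nat \<Rightarrow> real)) set" where
  "S_gon n \<nu> = simplex n \<nu> - boundary_O n \<nu>"

text \<open>Normalized gonosomal operator; gf i k j = gamma^(f)_{ik,j}, gm i k l = gamma^(m)_{ik,l}.\<close>
definition gonosomal_V ::
  "nat \<Rightarrow> nat \<Rightarrow> (nat \<Rightarrow> nat \<Rightarrow> nat \<Rightarrow> real) \<Rightarrow> (nat \<Rightarrow> nat \<Rightarrow> nat \<Rightarrow> real)
    \<Rightarrow> (nat \<Rightarrow> real) \<times> (nat \<Rightarrow> real) \<Rightarrow> (nat \<Rightarrow> real) \<times> (nat \<Rightarrow> real)" where
  "gonosomal_V n \<nu> gf gm = (\<lambda>(x, y).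
     ((\<lambda>j. (\<Sum>i=1..n. \<Sum>k=1..\<nu>. gf i k j * x i * y k) / ((\<Sum>i=1..n. x i) * (\<Sum>k=1..\<nu>. y k))),
      (\<lambda>l. (\<Sum>i=1..n. \<Sum>k=1..\<nu>. gm i k l * x i * y k) / ((\<Sum>i=1..n. x i) * (\<Sum>k=1..\<nu>. y k)))))"

end

theory Submission
  imports Defs
begin

text \<open>If every parent pair (i, k) produces offspring of both sexes, so does any population
  containing both sexes: the numerators of V are nonnegative bilinear forms in (x, y), and
  since the offspring distributions are stochastic their total mass equals the normalizing
  product (\<Sum>x)(\<Sum>y), which is positive on S. Conversely, V sends the point with a single
  female type i and a single male type k to the offspring distribution of (i, k).\<close>

lemma mem_S_gon_iff:
  "(x, y) \<in> S_gon n \<nu> \<longleftrightarrow> (\<forall>i\<in>{1..n}. x i \<ge> 0) \<and> (\<forall>k\<in>{1..\<nu>}. y k \<ge> 0) \<and>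
      (\<Sum>i=1..n. x i) + (\<Sum>k=1..\<nu>. y k) = 1 \<and> (\<exists>i\<in>{1..n}. x i \<noteq> 0) \<and> (\<exists>k\<in>{1..\<nu>}. y k \<noteq> 0)"
  unfolding S_gon_def boundary_O_def simplex_def by auto

lemma normalized_mem_S_gon:
  fixes F M :: "nat \<Rightarrow> real"
  assumes "D > 0" and "(\<Sum>j=1..n. F j) + (\<Sum>l=1..\<nu>. M l) = D"
    and "\<forall>j\<in>{1..n}. F j \<ge> 0" and "\<forall>l\<in>{1..\<nu>}. M l \<ge> 0"
    and "\<exists>j\<in>{1..n}. F j > 0" and "\<exists>l\<in>{1..\<nu>}. M l > 0"
  shows "(\<lambda>j. F j / D, \<lambda>l. M l / D) \<in> S_gon n \<nu>"
proof -
  have "(\<Sum>j=1..n. F j / D) + (\<Sum>l=1..\<nu>. M l / D) = 1"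
    using assms(1,2) by (simp add: sum_divide_distrib[symmetric] add_divide_distrib[symmetric])
  moreover have "\<exists>j\<in>{1..n}. F j / D \<noteq> 0"
    using assms(1,5) by (metis divide_pos_pos less_irrefl)
  moreover have "\<exists>l\<in>{1..\<nu>}. M l / D \<noteq> 0"
    using assms(1,6) by (metis divide_pos_pos less_irrefl)
  ultimately show ?thesis
    using assms(1,3,4) unfolding mem_S_gon_iff by simp
qed

lemma gonosomal_V_pure_state:
  assumes "i \<in> {1..n}" and "k \<in> {1..\<nu>}" and "a \<noteq> 0" and "b \<noteq> 0"
  shows "gonosomal_V n \<nu> gf gm (\<lambda>i'. if i' = i then a else 0, \<lambda>k'. if k' = k then b else 0)
       = (gf i k, gm i k)"
proof -
  have pick: "(\<Sum>i'=1..n. \<Sum>k'=1..\<nu>. g i' k' * (if i' = i then a else 0) * (if k' = k then b else 0))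
      = g i k * a * b" for g :: "nat \<Rightarrow> nat \<Rightarrow> real"
  proof -
    have "g i' k' * (if i' = i then a else 0) * (if k' = k then b else 0)
        = (if k' = k then if i' = i then g i k * a * b else 0 else 0)" for i' k'
      by simp
    then show ?thesis
      using assms(1,2) by (simp add: sum.delta)
  qed
  show ?thesis
    unfolding gonosomal_V_def using assms by (simp only: split pick) (simp add: sum.delta fun_eq_iff)
qed

lemma pure_state_mem_S_gon:
  assumes "i \<in> {1..n}" and "k \<in> {1..\<nu>}"
  shows "(\<lambda>i'. if i' = i then 1/2 else 0, \<lambda>k'. if k' = k then 1/2 else 0) \<in> S_gon n \<nu>"
  using assms unfolding mem_S_gon_iff by (auto simp: sum.delta)

lemma bilinear_sum_nonneg:
  fixes g :: "'a \<Rightarrow> 'b \<Rightarrow> real" and x :: "'a \<Rightarrow> real" and y :: "'b \<Rightarrow> real"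
  assumes "\<And>i k. i \<in> I \<Longrightarrow> k \<in> K \<Longrightarrow> g i k \<ge> 0"
    and "\<forall>i\<in>I. x i \<ge> 0" and "\<forall>k\<in>K. y k \<ge> 0"
  shows "(\<Sum>i\<in>I. \<Sum>k\<in>K. g i k * x i * y k) \<ge> 0"
  using assms by (intro sum_nonneg) simp

lemma bilinear_sum_pos:
  fixes g :: "'a \<Rightarrow> 'b \<Rightarrow> real" and x :: "'a \<Rightarrow> real" and y :: "'b \<Rightarrow> real"
  assumes "finite I" and "finite K"
    and "\<And>i k. i \<in> I \<Longrightarrow> k \<in> K \<Longrightarrow> g i k \<ge> 0"
    and "\<forall>i\<in>I. x i \<ge> 0" and "\<forall>k\<in>K. y k \<ge> 0"
    and "a \<in> I" and "b \<in> K" and "g a b > 0" and "x a > 0" and "y b > 0"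
  shows "(\<Sum>i\<in>I. \<Sum>k\<in>K. g i k * x i * y k) > 0"
proof (rule sum_pos2[OF assms(1,6)])
  show "(\<Sum>k\<in>K. g a k * x a * y k) > 0"
    using assms by (intro sum_pos2[OF assms(2,7)]) simp_all
  show "(\<Sum>k\<in>K. g i k * x i * y k) \<ge> 0" if "i \<in> I" for i
    using assms that by (intro sum_nonneg) simp
qed

lemma offspring_total_mass:
  fixes gf gm :: "'a \<Rightarrow> 'b \<Rightarrow> 'c \<Rightarrow> real" and x :: "'a \<Rightarrow> real" and y :: "'b \<Rightarrow> real"
  assumes "\<And>i k. i \<in> I \<Longrightarrow> k \<in> K \<Longrightarrow> (\<Sum>j\<in>J. gf i k j) + (\<Sum>l\<in>L. gm i k l) = 1"
  shows "(\<Sum>j\<in>J. \<Sum>i\<in>I. \<Sum>k\<in>K. gf i k j * x i * y k)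
       + (\<Sum>l\<in>L. \<Sum>i\<in>I. \<Sum>k\<in>K. gm i k l * x i * y k)
       = (\<Sum>i\<in>I. x i) * (\<Sum>k\<in>K. y k)"
proof -
  have swap: "(\<Sum>j\<in>J. \<Sum>i\<in>I. \<Sum>k\<in>K. g i k j * x i * y k)
      = (\<Sum>i\<in>I. \<Sum>k\<in>K. (\<Sum>j\<in>J. g i k j) * x i * y k)" for g :: "'a \<Rightarrow> 'b \<Rightarrow> 'c \<Rightarrow> real" and J
    by (subst sum.swap, rule sum.cong[OF refl], subst sum.swap)
       (simp add: sum_distrib_right)
  have "(\<Sum>j\<in>J. \<Sum>i\<in>I. \<Sum>k\<in>K. gf i k j * x i * y k)
       + (\<Sum>l\<in>L. \<Sum>i\<in>I. \<Sum>k\<in>K. gm i k l * x i * y k)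
      = (\<Sum>i\<in>I. \<Sum>k\<in>K. ((\<Sum>j\<in>J. gf i k j) + (\<Sum>l\<in>L. gm i k l)) * x i * y k)"
    unfolding swap by (simp add: sum.distrib distrib_right)
  also have "\<dots> = (\<Sum>i\<in>I. \<Sum>k\<in>K. x i * y k)"
    using assms by (intro sum.cong refl) simp
  finally show ?thesis
    by (simp add: sum_product)
qed

lemma gonosomal_V_mem_S_gon:
  assumes gf_nonneg: "\<And>i k j. i \<in> {1..n} \<Longrightarrow> k \<in> {1..\<nu>} \<Longrightarrow> j \<in> {1..n} \<Longrightarrow> gf i k j \<ge> 0"
    and gm_nonneg: "\<And>i k l. i \<in> {1..n} \<Longrightarrow> k \<in> {1..\<nu>} \<Longrightarrow> l \<in> {1..\<nu>} \<Longrightarrow> gm i k l \<ge> 0"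
    and stochastic: "\<And>i k. i \<in> {1..n} \<Longrightarrow> k \<in> {1..\<nu>} \<Longrightarrow>
           (\<Sum>j=1..n. gf i k j) + (\<Sum>l=1..\<nu>. gm i k l) = 1"
    and offspring: "\<forall>i\<in>{1..n}. \<forall>k\<in>{1..\<nu>}. (gf i k, gm i k) \<in> S_gon n \<nu>"
    and p_mem: "p \<in> S_gon n \<nu>"
  shows "gonosomal_V n \<nu> gf gm p \<in> S_gon n \<nu>"
proof -
  obtain x y where p_def: "p = (x, y)" and xy: "(x, y) \<in> S_gon n \<nu>"
    using p_mem by (metis prod.exhaust)
  from xy have x_nonneg: "\<forall>i\<in>{1..n}. x i \<ge> 0" and y_nonneg: "\<forall>k\<in>{1..\<nu>}. y k \<ge> 0"
    unfolding mem_S_gon_iff by auto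
  from xy x_nonneg obtain i0 where i0: "i0 \<in> {1..n}" "x i0 > 0"
    unfolding mem_S_gon_iff by (metis less_eq_real_def)
  from xy y_nonneg obtain k0 where k0: "k0 \<in> {1..\<nu>}" "y k0 > 0"
    unfolding mem_S_gon_iff by (metis less_eq_real_def)
  from offspring i0(1) k0(1) obtain j0 l0
    where j0: "j0 \<in> {1..n}" "gf i0 k0 j0 > 0" and l0: "l0 \<in> {1..\<nu>}" "gm i0 k0 l0 > 0"
    using gf_nonneg gm_nonneg unfolding mem_S_gon_iff by (metis less_eq_real_def)
  define F where "F j = (\<Sum>i=1..n. \<Sum>k=1..\<nu>. gf i k j * x i * y k)" for j
  define M where "M l = (\<Sum>i=1..n. \<Sum>k=1..\<nu>. gm i k l * x i * y k)" for l
  define D where "D = (\<Sum>i=1..n. x i) * (\<Sum>k=1..\<nu>. y k)"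
  have "D > 0"
    unfolding D_def using i0 k0 x_nonneg y_nonneg
    by (intro mult_pos_pos sum_pos2[of "{1..n}" i0 x] sum_pos2[of "{1..\<nu>}" k0 y]) auto
  moreover have "(\<Sum>j=1..n. F j) + (\<Sum>l=1..\<nu>. M l) = D"
    unfolding F_def M_def D_def using stochastic by (rule offspring_total_mass)
  moreover have "\<forall>j\<in>{1..n}. F j \<ge> 0" and "\<forall>l\<in>{1..\<nu>}. M l \<ge> 0"
    unfolding F_def M_def using gf_nonneg gm_nonneg x_nonneg y_nonneg
    by (auto intro!: bilinear_sum_nonneg)
  moreover have "F j0 > 0" and "M l0 > 0"
    unfolding F_def M_def using gf_nonneg gm_nonneg x_nonneg y_nonneg i0 k0 j0 l0
    by (auto intro!: bilinear_sum_pos[where a = i0 and b = k0])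
  ultimately have "(\<lambda>j. F j / D, \<lambda>l. M l / D) \<in> S_gon n \<nu>"
    using j0(1) l0(1) by (intro normalized_mem_S_gon) auto
  then show ?thesis
    by (simp add: p_def gonosomal_V_def F_def M_def D_def)
qed

theorem proposition4p1:
  fixes n \<nu> :: nat and gf gm :: "nat \<Rightarrow> nat \<Rightarrow> nat \<Rightarrow> real"
  assumes "n \<ge> 1" and "\<nu> \<ge> 1"
    and "\<And>i k j. i \<in> {1..n} \<Longrightarrow> k \<in> {1..\<nu>} \<Longrightarrow> j \<in> {1..n} \<Longrightarrow> gf i k j \<ge> 0"
    and "\<And>i k l. i \<in> {1..n} \<Longrightarrow> k \<in> {1..\<nu>} \<Longrightarrow> l \<in> {1..\<nu>} \<Longrightarrow> gm i k l \<ge> 0"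
    and "\<And>i k. i \<in> {1..n} \<Longrightarrow> k \<in> {1..\<nu>} \<Longrightarrow>
           (\<Sum>j=1..n. gf i k j) + (\<Sum>l=1..\<nu>. gm i k l) = 1"
  shows "(gonosomal_V n \<nu> gf gm ` S_gon n \<nu> \<subseteq> S_gon n \<nu>) \<longleftrightarrow>
         (\<forall>i\<in>{1..n}. \<forall>k\<in>{1..\<nu>}. (gf i k, gm i k) \<in> S_gon n \<nu>)"
proof
  assume invariant: "gonosomal_V n \<nu> gf gm ` S_gon n \<nu> \<subseteq> S_gon n \<nu>"
  show "\<forall>i\<in>{1..n}. \<forall>k\<in>{1..\<nu>}. (gf i k, gm i k) \<in> S_gon n \<nu>"
  proof (intro ballI)
    fix i k assume "i \<in> {1..n}" and "k \<in> {1..\<nu>}"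
    then have "gonosomal_V n \<nu> gf gm (\<lambda>i'. if i' = i then 1/2 else 0, \<lambda>k'. if k' = k then 1/2 else 0)
        \<in> S_gon n \<nu>"
      using invariant pure_state_mem_S_gon by blast
    with \<open>i \<in> {1..n}\<close> \<open>k \<in> {1..\<nu>}\<close> show "(gf i k, gm i k) \<in> S_gon n \<nu>"
      by (simp add: gonosomal_V_pure_state)
  qed
next
  assume "\<forall>i\<in>{1..n}. \<forall>k\<in>{1..\<nu>}. (gf i k, gm i k) \<in> S_gon n \<nu>"
  then show "gonosomal_V n \<nu> gf gm ` S_gon n \<nu> \<subseteq> S_gon n \<nu>"
    using assms(3-5) gonosomal_V_mem_S_gon[where gf = gf and gm = gm] by blast
qed

end
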